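(* Let $f:\mathbb{R}^n\to\mathbb{R}$ be $L$-smooth and $\mu$-strongly convex with $0<\mu<L$ and minimizer $x_*$, and let $R=\|x^0-x_*\|_2$. Then the iterates of Algorithm AGMsDR-SC (either option) satisfy, for every $k\ge1$, $$f(x^k)-f(x_* )\le\min\left\{\frac{2LR^2}{k^2},\ \left(1-\sqrt{\frac\mu L}\right)^{k-1}LR^2\right\}.$$
   Context: $\|\cdot\|=\|\cdot\|_2$ is the Euclidean norm on $\mathbb{R}^n$. $f$ is $L$-smooth if it is continuously differentiable with $\|\nabla f(x)-\nabla f(y)\|_2\le L\|x-y\|_2$ for all $x,y$; $f$ is $\mu$-strongly convex if $f(y)\ge f(x)+\langle\nabla f(x),y-x\rangle+\frac\mu2\|y-x\|_2^2$ for all $x,y$. Algorithm AGMsDR-SC (input $x^0$, and $L$ for Option (a)): set $A_0=0$, $\tau_0=1$, $v^0=x^0$, $\psi_0(x)=\frac12\|x-x^0\|_2^2$. For $k=0,1,2,\dots$: 1. Choose $\beta_k\in\arg\min_{\beta\in[0,1]} f(v^k+\beta(x^k-v^k))$ and set $y^k=v^k+\beta_k(x^k-v^k)$. 2. Option (a): $x^{k+1}=y^k-\frac1L\nabla f(y^k)$, and $a_{k+1}>0$ solves $\frac{a_{k+1}^2}{(\tau_k+\mu a_{k+1})(A_k+a_{k+1})}=\frac1L$. Option (b): $h_{k+1}\in\arg\min_{h\ge0}f\big(y^k-h\,\nabla f(y^k)/\|\nabla f(y^k)\|_2\big)$, $x^{k+1}=y^k-h_{k+1}\nabla f(y^k)/\|\nabla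 f(y^k)\|_2$, and $a_{k+1}$ is the largest solution of $$f(y^k)-\frac{a_{k+1}^2\|\nabla f(y^k)\|_2^2}{2(\tau_k+\mu a_{k+1})(A_k+a_{k+1})}+\frac{\mu\tau_ka_{k+1}\|v^k-y^k\|_2^2}{2(\tau_k+\mu a_{k+1})(A_k+a_{k+1})}=f(x^{k+1}).$$ 3. $A_{k+1}=A_k+a_{k+1}$, $\tau_{k+1}=\tau_k+\mu a_{k+1}$; $\psi_{k+1}(x)=\psi_k(x)+a_{k+1}\{f(y^k)+\langle\nabla f(y^k),x-y^k\rangle+\frac\mu2\|x-y^k\|_2^2\}$; $v^{k+1}=\arg\min_x\psi_{k+1}(x)$. All minima are assumed attained and $\nabla f(y^k)\neq0$ for all iterations considered. *)

theory Defs
  imports "HOL-Analysis.Analysis"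
begin

definition is_gradient :: "(real^'n \<Rightarrow> real) \<Rightarrow> (real^'n \<Rightarrow> real^'n) \<Rightarrow> bool" where
  "is_gradient f grad \<longleftrightarrow> (\<forall>x. (f has_derivative (\<lambda>h. grad x \<bullet> h)) (at x))"

definition L_smooth :: "(real^'n \<Rightarrow> real) \<Rightarrow> (real^'n \<Rightarrow> real^'n) \<Rightarrow> real \<Rightarrow> bool" where
  "L_smooth f grad L \<longleftrightarrow> is_gradient f grad \<and> continuous_on UNIV grad \<and>
     (\<forall>x y. norm (grad x - grad y) \<le> L * norm (x - y))"

definition strongly_convex :: "(real^'n \<Rightarrow> real) \<Rightarrow> (real^'n \<Rightarrow> real^'n) \<Rightarrow> real \<Rightarrow> bool" where
  "strongly_convex f grad \<mu> \<longleftrightarrow> is_gradient f grad \<and>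
     (\<forall>x y. f y \<ge> f x + grad x \<bullet> (y - x) + \<mu> / 2 * (norm (y - x))\<^sup>2)"

text \<open>Common part of AGMsDR-SC (steps 1 and 3, initialisation).\<close>
definition agmsdr_common ::
  "(real^'n \<Rightarrow> real) \<Rightarrow> (real^'n \<Rightarrow> real^'n) \<Rightarrow> real \<Rightarrow>
   (nat \<Rightarrow> real^'n) \<Rightarrow> (nat \<Rightarrow> real^'n) \<Rightarrow> (nat \<Rightarrow> real^'n) \<Rightarrow>
   (nat \<Rightarrow> real) \<Rightarrow> (nat \<Rightarrow> real) \<Rightarrow> (nat \<Rightarrow> real) \<Rightarrow> (nat \<Rightarrow> real) \<Rightarrow>
   (nat \<Rightarrow> real^'n \<Rightarrow> real) \<Rightarrow> bool" where
  "agmsdr_common f grad \<mu> x v y beta a A tau psi \<longleftrightarrow>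
     A 0 = 0 \<and> tau 0 = 1 \<and> v 0 = x 0 \<and>
     (\<forall>z. psi 0 z = 1/2 * (norm (z - x 0))\<^sup>2) \<and>
     (\<forall>k. beta k \<in> {0..1} \<and>
          (\<forall>b\<in>{0..1}. f (v k + beta k *\<^sub>R (x k - v k)) \<le> f (v k + b *\<^sub>R (x k - v k))) \<and>
          y k = v k + beta k *\<^sub>R (x k - v k)) \<and>
     (\<forall>k. A (Suc k) = A k + a (Suc k) \<and> tau (Suc k) = tau k + \<mu> * a (Suc k) \<and>
          (\<forall>z. psi (Suc k) z = psi k z + a (Suc k) *
               (f (y k) + grad (y k) \<bullet> (z - y k) + \<mu> / 2 * (norm (z - y k))\<^sup>2)) \<and>
          (\<forall>z. psi (Suc k) (v (Suc k)) \<le> psi (Suc k) z))"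

definition agmsdr_step_a ::
  "(real^'n \<Rightarrow> real^'n) \<Rightarrow> real \<Rightarrow> real \<Rightarrow>
   (nat \<Rightarrow> real^'n) \<Rightarrow> (nat \<Rightarrow> real^'n) \<Rightarrow>
   (nat \<Rightarrow> real) \<Rightarrow> (nat \<Rightarrow> real) \<Rightarrow> (nat \<Rightarrow> real) \<Rightarrow> nat \<Rightarrow> bool" where
  "agmsdr_step_a grad L \<mu> x y a A tau k \<longleftrightarrow>
     x (Suc k) = y k - (1 / L) *\<^sub>R grad (y k) \<and> a (Suc k) > 0 \<and>
     (a (Suc k))\<^sup>2 / ((tau k + \<mu> * a (Suc k)) * (A k + a (Suc k))) = 1 / L"

definition agmsdr_step_b ::
  "(real^'n \<Rightarrow> real) \<Rightarrow> (real^'n \<Rightarrow> real^'n) \<Rightarrow> real \<Rightarrow>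
   (nat \<Rightarrow> real^'n) \<Rightarrow> (nat \<Rightarrow> real^'n) \<Rightarrow> (nat \<Rightarrow> real^'n) \<Rightarrow> (nat \<Rightarrow> real) \<Rightarrow>
   (nat \<Rightarrow> real) \<Rightarrow> (nat \<Rightarrow> real) \<Rightarrow> (nat \<Rightarrow> real) \<Rightarrow> nat \<Rightarrow> bool" where
  "agmsdr_step_b f grad \<mu> x v y h a A tau k \<longleftrightarrow>
     (let d = grad (y k) /\<^sub>R norm (grad (y k));
          eq = (\<lambda>t. f (y k) - t\<^sup>2 * (norm (grad (y k)))\<^sup>2 / (2 * (tau k + \<mu> * t) * (A k + t))
                    + \<mu> * tau k * t * (norm (v k - y k))\<^sup>2 / (2 * (tau k + \<mu> * t) * (A k + t))
                    = f (x (Suc k)))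
      in h (Suc k) \<ge> 0 \<and>
         (\<forall>s\<ge>0. f (y k - h (Suc k) *\<^sub>R d) \<le> f (y k - s *\<^sub>R d)) \<and>
         x (Suc k) = y k - h (Suc k) *\<^sub>R d \<and>
         eq (a (Suc k)) \<and> (\<forall>t. eq t \<longrightarrow> t \<le> a (Suc k)))"

end

theory Submission
  imports Defs
begin

text \<open>
  Estimate-sequence argument.  By strong convexity, psi k \<le> A k * f + 1/2 * norm (- - x 0)^2,
  while psi k is a quadratic of curvature tau k minimised at v k.  The line search on the
  segment [v k, x k] gives grad (y k) \<bullet> (v k - y k) \<ge> 0, and together with the sufficient
  decrease of the gradient step this keeps A k * f (x k) \<le> psi k (v k).  Hence
  f (x k) - f xs \<le> R^2 / (2 * A k).  Both options guarantee tau (k+1) * A (k+1) \<le> L * a (k+1)^2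
  (option (b) via an intermediate-value argument on the equation defining a (k+1)).  As tau \<ge> 1,
  sqrt (A k) grows by at least 1 / (2 * sqrt L) per step; as tau \<ge> \<mu> * A, A k grows
  geometrically with ratio 1 / (1 - sqrt (\<mu> / L)).
\<close>

lemma is_gradient_along_line:
  assumes "is_gradient f grad"
  shows "((\<lambda>t. f (y + t *\<^sub>R d)) has_real_derivative grad (y + t *\<^sub>R d) \<bullet> d) (at t)"
proof -
  have "((\<lambda>s. y + s *\<^sub>R d) has_derivative (\<lambda>s. s *\<^sub>R d)) (at t)"
    by (auto intro!: derivative_eq_intros)
  from has_derivative_compose[OF this assms[unfolded is_gradient_def, rule_format]]
  show ?thesis
    by (simp add: has_field_derivative_def mult_commute_abs)
qed

lemma L_smooth_descent:
  assumes "L_smooth f grad L"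
  shows "f (y + d) \<le> f y + grad y \<bullet> d + L / 2 * (norm d)\<^sup>2"
proof -
  have grad: "is_gradient f grad" and lip: "\<And>p q. norm (grad p - grad q) \<le> L * norm (p - q)"
    using assms unfolding L_smooth_def by blast+
  define \<phi> where "\<phi> t = f (y + t *\<^sub>R d) - t * (grad y \<bullet> d) - L / 2 * t\<^sup>2 * (norm d)\<^sup>2" for t
  have deriv: "(\<phi> has_real_derivative grad (y + t *\<^sub>R d) \<bullet> d - grad y \<bullet> d - L * t * (norm d)\<^sup>2) (at t)"
    for t unfolding \<phi>_def by (rule derivative_eq_intros is_gradient_along_line[OF grad] | simp)+
  have lipschitz: "grad (y + t *\<^sub>R d) \<bullet> d - grad y \<bullet> d \<le> L * t * (norm d)\<^sup>2" if "0 \<le> t" for t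
  proof -
    have "grad (y + t *\<^sub>R d) \<bullet> d - grad y \<bullet> d \<le> norm (grad (y + t *\<^sub>R d) - grad y) * norm d"
      by (metis inner_diff_left norm_cauchy_schwarz)
    also have "\<dots> \<le> L * norm (t *\<^sub>R d) * norm d"
      using lip[of "y + t *\<^sub>R d" y] by (simp add: mult_right_mono)
    finally show ?thesis using that by (simp add: power2_eq_square mult.assoc)
  qed
  have "\<phi> 1 \<le> \<phi> 0"
    by (rule DERIV_nonpos_imp_nonincreasing[of 0 1]) (use deriv lipschitz in fastforce)+
  thus ?thesis unfolding \<phi>_def by simp
qed

lemma L_smooth_gradient_step:
  assumes "L_smooth f grad L" and "0 < L"
  shows "f (y - (1 / L) *\<^sub>R grad y) \<le> f y - (norm (grad y))\<^sup>2 / (2 * L)"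
  using L_smooth_descent[OF assms(1), of y "- (1 / L) *\<^sub>R grad y"] assms(2)
  by (simp add: power2_norm_eq_inner[symmetric] power_mult_distrib power2_eq_square field_simps)

lemma strongly_convex_min_lower_bound:
  assumes "strongly_convex f grad \<mu>" and "0 < \<mu>"
  shows "f y - (norm (grad y))\<^sup>2 / (2 * \<mu>) \<le> f z"
proof -
  have "f y + grad y \<bullet> (z - y) + \<mu> / 2 * (norm (z - y))\<^sup>2 \<le> f z"
    using assms(1) unfolding strongly_convex_def by blast
  moreover have "- (norm (grad y) * norm (z - y)) \<le> grad y \<bullet> (z - y)"
    using norm_cauchy_schwarz[of "- grad y" "z - y"] by simp
  moreover have "0 \<le> (\<mu> * norm (z - y) - norm (grad y))\<^sup>2 / (2 * \<mu>)"
    using assms(2) by simp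
  moreover have "(\<mu> * norm (z - y) - norm (grad y))\<^sup>2 / (2 * \<mu>)
      = \<mu> / 2 * (norm (z - y))\<^sup>2 - norm (grad y) * norm (z - y) + (norm (grad y))\<^sup>2 / (2 * \<mu>)"
    using assms(2) by (simp add: field_simps power2_eq_square)
  ultimately show ?thesis by linarith
qed

lemma gradient_nonneg_at_segment_min:
  assumes "is_gradient f grad" and "\<And>t. 0 \<le> t \<Longrightarrow> t \<le> 1 \<Longrightarrow> f y \<le> f (y + t *\<^sub>R d)"
  shows "0 \<le> grad y \<bullet> d"
proof (rule ccontr)
  assume "\<not> 0 \<le> grad y \<bullet> d"
  then obtain e where "0 < e" and decrease: "\<And>t. 0 < t \<Longrightarrow> t < e \<Longrightarrow> f (y + t *\<^sub>R d) < f y"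
    using DERIV_neg_dec_right[OF is_gradient_along_line[OF assms(1), of y d 0]] by force
  have "f (y + min (e / 2) 1 *\<^sub>R d) < f y"
    using \<open>0 < e\<close> by (intro decrease) auto
  with assms(2)[of "min (e / 2) 1"] \<open>0 < e\<close> show False by simp
qed

lemma quadratic_model_lower_bound:
  fixes g z v y :: "'a::real_inner"
  assumes "0 < \<tau>" "0 \<le> a" "0 \<le> \<mu>" and "0 \<le> g \<bullet> (v - y)"
  shows "- a\<^sup>2 * (norm g)\<^sup>2 / (2 * (\<tau> + \<mu> * a)) + \<tau> * \<mu> * a * (norm (v - y))\<^sup>2 / (2 * (\<tau> + \<mu> * a))
    \<le> \<tau> / 2 * (norm (z - v))\<^sup>2 + a * (g \<bullet> (z - y)) + a * \<mu> / 2 * (norm (z - y))\<^sup>2"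
proof -
  define w u where "w = z - y" and "u = y - v"
  define t where "t = \<tau> + \<mu> * a"
  have "0 < t" using assms unfolding t_def by (simp add: add_pos_nonneg)
  have "g \<bullet> u \<le> 0" using assms(4) unfolding u_def by (simp add: inner_diff_right)
  have scaled: "2 * t * (- a\<^sup>2 * (norm g)\<^sup>2 / (2 * t) + \<tau> * \<mu> * a * (norm u)\<^sup>2 / (2 * t))
      = - a\<^sup>2 * (g \<bullet> g) + \<tau> * \<mu> * a * (u \<bullet> u)"
    using \<open>0 < t\<close> by (simp add: field_simps power2_norm_eq_inner)
  \<comment> \<open>after scaling by 2t the gap is a square plus the nonnegative term -2\<tau>a(g\<bullet>u)\<close>
  have "2 * t * (\<tau> / 2 * (norm (w + u))\<^sup>2 + a * (g \<bullet> w) + a * \<mu> / 2 * (norm w)\<^sup>2)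
      - 2 * t * (- a\<^sup>2 * (norm g)\<^sup>2 / (2 * t) + \<tau> * \<mu> * a * (norm u)\<^sup>2 / (2 * t))
      = (norm (t *\<^sub>R w + \<tau> *\<^sub>R u + a *\<^sub>R g))\<^sup>2 - 2 * \<tau> * a * (g \<bullet> u)"
    unfolding scaled unfolding power2_norm_eq_inner t_def
    by (simp add: inner_add_left inner_add_right inner_commute algebra_simps power2_eq_square)
  also have "0 \<le> \<dots>"
  proof -
    have "2 * \<tau> * a * (g \<bullet> u) \<le> 0"
      using \<open>g \<bullet> u \<le> 0\<close> assms(1,2) by (intro mult_nonneg_nonpos) simp_all
    thus ?thesis by (smt (verit) zero_le_power2)
  qed
  finally have "0 \<le> 2 * t * ((\<tau> / 2 * (norm (w + u))\<^sup>2 + a * (g \<bullet> w) + a * \<mu> / 2 * (norm w)\<^sup>2)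
      - (- a\<^sup>2 * (norm g)\<^sup>2 / (2 * t) + \<tau> * \<mu> * a * (norm u)\<^sup>2 / (2 * t)))"
    by (simp add: right_diff_distrib)
  with \<open>0 < t\<close> have "0 \<le> (\<tau> / 2 * (norm (w + u))\<^sup>2 + a * (g \<bullet> w) + a * \<mu> / 2 * (norm w)\<^sup>2)
      - (- a\<^sup>2 * (norm g)\<^sup>2 / (2 * t) + \<tau> * \<mu> * a * (norm u)\<^sup>2 / (2 * t))"
    by (simp add: zero_le_mult_iff)
  moreover have "w + u = z - v" "norm u = norm (v - y)"
    unfolding w_def u_def by (simp_all add: norm_minus_commute)
  ultimately show ?thesis unfolding t_def w_def by simp
qed

lemma quadratic_model_canonical_form:
  fixes z v y g p :: "'a::real_inner"
  assumes "t = \<tau> + a * \<mu>" "t \<noteq> 0" and "p = (1 / t) *\<^sub>R (\<tau> *\<^sub>R v + (a * \<mu>) *\<^sub>R y - a *\<^sub>R g)"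
  shows "\<tau> / 2 * (norm (z - v))\<^sup>2 + a * (g \<bullet> (z - y)) + a * \<mu> / 2 * (norm (z - y))\<^sup>2
     = t / 2 * (norm (z - p))\<^sup>2 + (\<tau> / 2 * (v \<bullet> v) - a * (g \<bullet> y) + a * \<mu> / 2 * (y \<bullet> y) - t / 2 * (p \<bullet> p))"
proof -
  have norm_expand: "(norm (z - q))\<^sup>2 = z \<bullet> z - 2 * (z \<bullet> q) + q \<bullet> q" for q :: 'a
    unfolding power2_norm_eq_inner by (simp add: inner_diff_left inner_diff_right inner_commute)
  have "t * (z \<bullet> p) = \<tau> * (z \<bullet> v) + a * \<mu> * (z \<bullet> y) - a * (z \<bullet> g)"
    using assms by (simp add: inner_diff_right inner_add_right)
  hence "t / 2 * (norm (z - p))\<^sup>2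
      = t / 2 * (z \<bullet> z) - (\<tau> * (z \<bullet> v) + a * \<mu> * (z \<bullet> y) - a * (z \<bullet> g)) + t / 2 * (p \<bullet> p)"
    unfolding norm_expand by (simp add: algebra_simps)
  thus ?thesis
    unfolding norm_expand[of v] norm_expand[of y] assms(1)
    by (simp add: inner_diff_right inner_commute field_simps)
qed

lemma quadratic_minimizer_form:
  fixes \<phi> :: "'a::real_normed_vector \<Rightarrow> real"
  assumes "\<And>z. \<phi> z = c + t / 2 * (norm (z - p))\<^sup>2" "0 < t" "\<And>z. \<phi> m \<le> \<phi> z"
  shows "\<phi> z = \<phi> m + t / 2 * (norm (z - m))\<^sup>2"
proof -
  have "t / 2 * (norm (m - p))\<^sup>2 \<le> 0" using assms(1)[of m] assms(1)[of p] assms(3)[of p] by simp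
  hence "m = p" using assms(2) by (simp add: mult_le_0_iff)
  thus ?thesis using assms(1) by simp
qed

lemma quadratic_eventually_negative:
  fixes \<alpha> \<beta> \<gamma> t0 :: real
  assumes "\<alpha> < 0"
  shows "\<exists>T \<ge> t0. 0 < T \<and> \<alpha> * T\<^sup>2 + \<beta> * T + \<gamma> < 0"
proof -
  define B where "B = \<bar>\<beta>\<bar> + \<bar>\<gamma>\<bar> + 1"
  define T where "T = max (max t0 1) (B / (- \<alpha>))"
  have "1 \<le> T" "t0 \<le> T" unfolding T_def by auto
  have "- \<alpha> * (B / (- \<alpha>)) \<le> - \<alpha> * T"
    using assms unfolding T_def by (intro mult_left_mono) simp_all
  hence "B \<le> - \<alpha> * T" using assms by simp
  have "\<beta> * T \<le> \<bar>\<beta>\<bar> * T" "\<gamma> \<le> \<bar>\<gamma>\<bar> * T"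
    using \<open>1 \<le> T\<close> by (auto intro: mult_right_mono order_trans[OF abs_ge_self] simp: mult_le_cancel_left1)
  hence "\<alpha> * T\<^sup>2 + \<beta> * T + \<gamma> \<le> T * (\<alpha> * T + B) - T"
    unfolding B_def by (simp add: algebra_simps power2_eq_square)
  also have "\<dots> \<le> - T"
    using \<open>B \<le> - \<alpha> * T\<close> \<open>1 \<le> T\<close> mult_left_mono[of "\<alpha> * T + B" 0 T] by simp
  finally show ?thesis using \<open>1 \<le> T\<close> \<open>t0 \<le> T\<close> by auto
qed

lemma agmsdr_step_equation_root_above:
  fixes \<tau> A \<mu> L G d c fy :: real
  assumes "0 < \<tau>" "0 \<le> A" "0 < \<mu>" "0 < L" "0 \<le> G" "0 \<le> d"
    and decrease: "c \<le> fy - G / (2 * L)" and gap: "fy - G / (2 * \<mu>) < c"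
  shows "\<exists>r \<ge> \<tau> / L. fy - r\<^sup>2 * G / (2 * (\<tau> + \<mu> * r) * (A + r))
                      + \<mu> * \<tau> * r * d / (2 * (\<tau> + \<mu> * r) * (A + r)) = c"
proof -
  define E where "E t = fy - t\<^sup>2 * G / (2 * (\<tau> + \<mu> * t) * (A + t))
                      + \<mu> * \<tau> * t * d / (2 * (\<tau> + \<mu> * t) * (A + t))" for t
  define t0 where "t0 = \<tau> / L"
  have "0 < t0" using assms unfolding t0_def by simp
  have denom_pos: "0 < 2 * (\<tau> + \<mu> * t) * (A + t)" if "0 < t" for t
    using that assms by (simp add: add_pos_nonneg)
  have "c \<le> E t0"
  proof -
    have "\<tau> * t0 \<le> (\<tau> + \<mu> * t0) * (A + t0)"
      using assms \<open>0 < t0\<close> by (intro mult_mono) simp_all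
    hence "t0\<^sup>2 * G / 2 / ((\<tau> + \<mu> * t0) * (A + t0)) \<le> t0\<^sup>2 * G / 2 / (\<tau> * t0)"
      using assms \<open>0 < t0\<close> by (intro divide_left_mono mult_pos_pos) (simp_all add: add_pos_nonneg)
    hence "t0\<^sup>2 * G / (2 * (\<tau> + \<mu> * t0) * (A + t0)) \<le> t0\<^sup>2 * G / 2 / (\<tau> * t0)"
      by (simp only: divide_divide_eq_left mult.assoc)
    also have "\<dots> = G / (2 * L)"
      using assms unfolding t0_def by (simp add: field_simps power2_eq_square)
    finally have "t0\<^sup>2 * G / (2 * (\<tau> + \<mu> * t0) * (A + t0)) \<le> G / (2 * L)" .
    moreover have "0 \<le> \<mu> * \<tau> * t0 * d / (2 * (\<tau> + \<mu> * t0) * (A + t0))"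
      using denom_pos[OF \<open>0 < t0\<close>] assms \<open>0 < t0\<close> by simp
    ultimately show ?thesis
      using decrease unfolding E_def by linarith
  qed
  \<comment> \<open>the numerator of E - c is a quadratic whose leading coefficient is negative by gap\<close>
  define \<alpha> \<beta> \<gamma> where "\<alpha> = 2 * \<mu> * (fy - c) - G"
    and "\<beta> = 2 * (\<tau> + \<mu> * A) * (fy - c) + \<mu> * \<tau> * d" and "\<gamma> = 2 * \<tau> * A * (fy - c)"
  have E_minus_c: "E t - c = (\<alpha> * t\<^sup>2 + \<beta> * t + \<gamma>) / (2 * (\<tau> + \<mu> * t) * (A + t))" if "0 < t" for t
  proof -
    define D where "D = 2 * (\<tau> + \<mu> * t) * (A + t)"
    have "D \<noteq> 0" using denom_pos[OF that] unfolding D_def by linarith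
    have "E t - c = ((fy - c) * D - t\<^sup>2 * G + \<mu> * \<tau> * t * d) / D"
      using \<open>D \<noteq> 0\<close> unfolding E_def D_def[symmetric]
      by (simp add: diff_divide_distrib add_divide_distrib)
    also have "(fy - c) * D - t\<^sup>2 * G + \<mu> * \<tau> * t * d = \<alpha> * t\<^sup>2 + \<beta> * t + \<gamma>"
      unfolding D_def \<alpha>_def \<beta>_def \<gamma>_def by (simp add: algebra_simps power2_eq_square)
    finally show ?thesis unfolding D_def .
  qed
  have "\<alpha> < 0" using gap assms(3) unfolding \<alpha>_def by (simp add: field_simps)
  then obtain T where "t0 \<le> T" "0 < T" "\<alpha> * T\<^sup>2 + \<beta> * T + \<gamma> < 0"
    using quadratic_eventually_negative by blast
  hence "(\<alpha> * T\<^sup>2 + \<beta> * T + \<gamma>) / (2 * (\<tau> + \<mu> * T) * (A + T)) < 0"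
    using denom_pos[of T] by (intro divide_neg_pos) simp_all
  hence "E T \<le> c"
    using E_minus_c[OF \<open>0 < T\<close>] by linarith
  moreover have "continuous_on {t0..T} E"
  proof -
    have "2 * (\<tau> + \<mu> * t) * (A + t) \<noteq> 0" if "t \<in> {t0..T}" for t
      using denom_pos[of t] that \<open>0 < t0\<close> by auto
    thus ?thesis unfolding E_def by (intro continuous_intros) auto
  qed
  ultimately obtain r where "t0 \<le> r" "E r = c"
    using IVT2'[of E T c t0] \<open>c \<le> E t0\<close> \<open>t0 \<le> T\<close> by blast
  thus ?thesis unfolding E_def t0_def by blast
qed

lemma sqrt_increment_lower_bound:
  fixes A a L :: real
  assumes "0 \<le> A" "0 < a" "0 < L" and growth: "A + a \<le> L * a\<^sup>2"
  shows "1 \<le> 2 * sqrt L * (sqrt (A + a) - sqrt A)"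
proof -
  define p r where "p = sqrt (A + a)" and "r = sqrt A"
  have "0 \<le> r" "r < p" "0 < p" "p\<^sup>2 = A + a" "r\<^sup>2 = A"
    using assms unfolding p_def r_def by simp_all
  have "a = p\<^sup>2 - r\<^sup>2" using \<open>p\<^sup>2 = A + a\<close> \<open>r\<^sup>2 = A\<close> by simp
  also have "\<dots> = (p - r) * (p + r)" by (simp add: power2_eq_square algebra_simps)
  also have "\<dots> \<le> (p - r) * (2 * p)"
    using \<open>r < p\<close> by (intro mult_left_mono) simp_all
  finally have "a\<^sup>2 \<le> ((p - r) * (2 * p))\<^sup>2"
    using assms(2) by (intro power_mono) simp_all
  hence "L * a\<^sup>2 \<le> L * ((p - r) * (2 * p))\<^sup>2"
    using assms(3) by (intro mult_left_mono) simp_all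
  hence "p\<^sup>2 \<le> L * ((p - r) * (2 * p))\<^sup>2"
    using growth \<open>p\<^sup>2 = A + a\<close> by linarith
  also have "L * ((p - r) * (2 * p))\<^sup>2 = p\<^sup>2 * (4 * L * (p - r)\<^sup>2)"
    by (simp add: power2_eq_square algebra_simps)
  also have "4 * L * (p - r)\<^sup>2 = (2 * sqrt L * (p - r))\<^sup>2"
    using assms(3) by (simp only: power_mult_distrib real_sqrt_pow2 less_imp_le) simp
  finally have "1\<^sup>2 \<le> (2 * sqrt L * (p - r))\<^sup>2"
    using \<open>0 < p\<close> by simp
  moreover have "0 \<le> 2 * sqrt L * (p - r)"
    using \<open>r < p\<close> assms(3) by simp
  ultimately show ?thesis
    unfolding p_def r_def by (rule power2_le_imp_le)
qed

lemma linear_increment_lower_bound: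
  fixes A a L \<mu> :: real
  assumes "0 \<le> A" "0 \<le> a" "0 < L" "0 \<le> \<mu>" and growth: "\<mu> * (A + a)\<^sup>2 \<le> L * a\<^sup>2"
  shows "A \<le> (1 - sqrt (\<mu> / L)) * (A + a)"
proof -
  have "\<mu> / L * (A + a)\<^sup>2 \<le> a\<^sup>2"
    using growth assms(3) by (simp add: field_simps)
  hence "sqrt (\<mu> / L * (A + a)\<^sup>2) \<le> sqrt (a\<^sup>2)"
    by (rule real_sqrt_le_mono)
  moreover have "sqrt (\<mu> / L * (A + a)\<^sup>2) = sqrt (\<mu> / L) * (A + a)"
    using assms(1,2) by (simp only: real_sqrt_mult real_sqrt_abs abs_of_nonneg add_nonneg_nonneg)
  ultimately have "sqrt (\<mu> / L) * (A + a) \<le> a"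
    using assms(2) by simp
  thus ?thesis by (simp add: algebra_simps)
qed

locale agmsdr_sc_run =
  fixes f :: "real^'n \<Rightarrow> real" and grad :: "real^'n \<Rightarrow> real^'n"
    and L \<mu> :: real and xs :: "real^'n"
    and x v y :: "nat \<Rightarrow> real^'n" and beta h a A tau :: "nat \<Rightarrow> real"
    and psi :: "nat \<Rightarrow> real^'n \<Rightarrow> real"
  assumes smooth: "L_smooth f grad L"
    and sconv: "strongly_convex f grad \<mu>"
    and mu_pos: "0 < \<mu>" and mu_L: "\<mu> < L"
    and minimizer: "\<forall>z. f xs \<le> f z"
    and common: "agmsdr_common f grad \<mu> x v y beta a A tau psi"
    and options: "(\<forall>k. agmsdr_step_a grad L \<mu> x y a A tau k) \<or>
                  (\<forall>k. agmsdr_step_b f grad \<mu> x v y h a A tau k)"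
    and grad_nz: "\<forall>k. grad (y k) \<noteq> 0"
begin

lemma L_pos: "0 < L"
  using mu_pos mu_L by simp

lemma A_0: "A 0 = 0" and tau_0: "tau 0 = 1" and v_0: "v 0 = x 0"
  and psi_0: "psi 0 z = 1 / 2 * (norm (z - x 0))\<^sup>2"
  and beta_range: "beta k \<in> {0..1}"
  and beta_min: "b \<in> {0..1} \<Longrightarrow> f (v k + beta k *\<^sub>R (x k - v k)) \<le> f (v k + b *\<^sub>R (x k - v k))"
  and y_eq: "y k = v k + beta k *\<^sub>R (x k - v k)"
  and A_Suc: "A (Suc k) = A k + a (Suc k)"
  and tau_Suc: "tau (Suc k) = tau k + \<mu> * a (Suc k)"
  and psi_Suc: "psi (Suc k) z = psi k z + a (Suc k) *
               (f (y k) + grad (y k) \<bullet> (z - y k) + \<mu> / 2 * (norm (z - y k))\<^sup>2)"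
  and v_Suc_min: "psi (Suc k) (v (Suc k)) \<le> psi (Suc k) z"
  using common unfolding agmsdr_common_def by blast+

lemma tau_eq: "tau k = 1 + \<mu> * A k"
  by (induction k) (simp_all add: tau_0 A_0 tau_Suc A_Suc algebra_simps)

lemma f_y_le_f_x: "f (y k) \<le> f (x k)"
  using beta_min[of 1 k] y_eq[of k] by simp

lemma f_x_Suc_sufficient_decrease: "f (x (Suc k)) \<le> f (y k) - (norm (grad (y k)))\<^sup>2 / (2 * L)"
  using options
proof
  assume "\<forall>k. agmsdr_step_a grad L \<mu> x y a A tau k"
  hence "x (Suc k) = y k - (1 / L) *\<^sub>R grad (y k)" unfolding agmsdr_step_a_def by blast
  thus ?thesis using L_smooth_gradient_step[OF smooth L_pos, of "y k"] by simp
next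
  let ?d = "grad (y k) /\<^sub>R norm (grad (y k))"
  assume "\<forall>k. agmsdr_step_b f grad \<mu> x v y h a A tau k"
  hence line_search: "\<forall>s\<ge>0. f (y k - h (Suc k) *\<^sub>R ?d) \<le> f (y k - s *\<^sub>R ?d)"
    and x_Suc: "x (Suc k) = y k - h (Suc k) *\<^sub>R ?d"
    unfolding agmsdr_step_b_def Let_def by blast+
  have "f (x (Suc k)) \<le> f (y k - (norm (grad (y k)) / L) *\<^sub>R ?d)"
    unfolding x_Suc by (rule line_search[rule_format]) (use L_pos in simp)
  also have "(norm (grad (y k)) / L) *\<^sub>R ?d = (1 / L) *\<^sub>R grad (y k)"
    using grad_nz by simp
  finally show ?thesis using L_smooth_gradient_step[OF smooth L_pos, of "y k"] by simp
qed

lemma min_less_f_y: "f xs < f (y k)"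
proof -
  have "f xs \<le> f (y k - (1 / L) *\<^sub>R grad (y k))" using minimizer by blast
  moreover have "0 < (norm (grad (y k)))\<^sup>2 / (2 * L)" using grad_nz L_pos by simp
  ultimately show ?thesis using L_smooth_gradient_step[OF smooth L_pos, of "y k"] by linarith
qed

lemma min_less_f_x: "f xs < f (x k)"
  using min_less_f_y[of k] f_y_le_f_x[of k] by simp

lemma gradient_nonneg_towards_v: "0 \<le> grad (y k) \<bullet> (v k - y k)"
proof (rule gradient_nonneg_at_segment_min[of f grad])
  show "is_gradient f grad" using smooth unfolding L_smooth_def by blast
next
  fix t :: real assume "0 \<le> t" "t \<le> 1"
  hence "beta k * (1 - t) \<in> {0..1}" using beta_range[of k] by (auto simp: mult_le_one)
  hence "f (y k) \<le> f (v k + (beta k * (1 - t)) *\<^sub>R (x k - v k))"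
    using beta_min[of "beta k * (1 - t)" k] y_eq[of k] by simp
  moreover have "v k + (beta k * (1 - t)) *\<^sub>R (x k - v k) = y k + t *\<^sub>R (v k - y k)"
    unfolding y_eq[of k] by (simp add: algebra_simps)
  ultimately show "f (y k) \<le> f (y k + t *\<^sub>R (v k - y k))" by simp
qed

lemma step_b_a_Suc_ge:
  assumes step: "agmsdr_step_b f grad \<mu> x v y h a A tau k" and "0 \<le> A k"
  shows "tau k / L \<le> a (Suc k)"
proof -
  have "0 < tau k" using \<open>0 \<le> A k\<close> mu_pos unfolding tau_eq by (simp add: add_pos_nonneg)
  moreover have "f (y k) - (norm (grad (y k)))\<^sup>2 / (2 * \<mu>) < f (x (Suc k))"
    using strongly_convex_min_lower_bound[OF sconv mu_pos, of "y k" xs] min_less_f_x[of "Suc k"]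
    by linarith
  ultimately obtain r where "tau k / L \<le> r"
    and "f (y k) - r\<^sup>2 * (norm (grad (y k)))\<^sup>2 / (2 * (tau k + \<mu> * r) * (A k + r))
         + \<mu> * tau k * r * (norm (v k - y k))\<^sup>2 / (2 * (tau k + \<mu> * r) * (A k + r)) = f (x (Suc k))"
    using agmsdr_step_equation_root_above[of "tau k" "A k" \<mu> L "(norm (grad (y k)))\<^sup>2"
        "(norm (v k - y k))\<^sup>2" "f (x (Suc k))" "f (y k)"] \<open>0 \<le> A k\<close> mu_pos L_pos f_x_Suc_sufficient_decrease
    by auto
  moreover have "r \<le> a (Suc k)"
    using step calculation(2) unfolding agmsdr_step_b_def Let_def by blast
  ultimately show ?thesis by simp
qed

lemma a_Suc_pos_if_A_nonneg: "0 \<le> A k \<Longrightarrow> 0 < a (Suc k)"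
  using options
proof
  assume "\<forall>k. agmsdr_step_a grad L \<mu> x y a A tau k"
  thus ?thesis unfolding agmsdr_step_a_def by blast
next
  assume "\<forall>k. agmsdr_step_b f grad \<mu> x v y h a A tau k" and "0 \<le> A k"
  hence "tau k / L \<le> a (Suc k)" using step_b_a_Suc_ge by blast
  moreover have "0 < tau k / L" using \<open>0 \<le> A k\<close> mu_pos L_pos unfolding tau_eq
    by (intro divide_pos_pos) (simp_all add: add_pos_nonneg)
  ultimately show ?thesis by simp
qed

lemma A_nonneg: "0 \<le> A k"
  by (induction k) (simp_all add: A_0 A_Suc a_Suc_pos_if_A_nonneg add_nonneg_pos less_imp_le)

lemma a_Suc_pos: "0 < a (Suc k)"
  using a_Suc_pos_if_A_nonneg[OF A_nonneg] .

lemma A_Suc_pos: "0 < A (Suc k)"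
  using A_nonneg[of k] a_Suc_pos[of k] by (simp add: A_Suc)

lemma tau_ge_1: "1 \<le> tau k"
  using A_nonneg[of k] mu_pos unfolding tau_eq by simp

lemma step_b_equation:
  assumes "agmsdr_step_b f grad \<mu> x v y h a A tau k"
  shows "f (x (Suc k)) = f (y k) - (a (Suc k))\<^sup>2 * (norm (grad (y k)))\<^sup>2 / (2 * tau (Suc k) * A (Suc k))
           + \<mu> * tau k * a (Suc k) * (norm (v k - y k))\<^sup>2 / (2 * tau (Suc k) * A (Suc k))"
  using assms unfolding agmsdr_step_b_def Let_def tau_Suc A_Suc by auto

lemma A_growth: "tau (Suc k) * A (Suc k) \<le> L * (a (Suc k))\<^sup>2"
proof -
  define G where "G = (norm (grad (y k)))\<^sup>2"
  define r where "r = (a (Suc k))\<^sup>2 / (tau (Suc k) * A (Suc k))"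
  have "0 < tau (Suc k) * A (Suc k)"
    using tau_ge_1[of "Suc k"] A_Suc_pos[of k] by simp
  have "1 / L \<le> r"
    using options
  proof
    assume "\<forall>k. agmsdr_step_a grad L \<mu> x y a A tau k"
    thus ?thesis unfolding agmsdr_step_a_def r_def tau_Suc A_Suc by simp
  next
    assume "\<forall>k. agmsdr_step_b f grad \<mu> x v y h a A tau k"
    hence "f (x (Suc k)) = f (y k) - r * G / 2
        + \<mu> * tau k * a (Suc k) * (norm (v k - y k))\<^sup>2 / (2 * tau (Suc k) * A (Suc k))"
      using step_b_equation unfolding r_def G_def by (simp add: mult.assoc)
    moreover have "0 \<le> \<mu> * tau k * a (Suc k) * (norm (v k - y k))\<^sup>2 / (2 * tau (Suc k) * A (Suc k))"
      using mu_pos tau_ge_1[of k] a_Suc_pos[of k] \<open>0 < tau (Suc k) * A (Suc k)\<close>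
      by (simp add: mult.assoc)
    ultimately have "1 / L * G \<le> r * G"
      using f_x_Suc_sufficient_decrease[of k] unfolding G_def by simp
    moreover have "0 < G" unfolding G_def using grad_nz by simp
    ultimately show ?thesis by (metis mult_le_cancel_right_pos)
  qed
  thus ?thesis
    using \<open>0 < tau (Suc k) * A (Suc k)\<close> L_pos unfolding r_def by (simp add: field_simps)
qed

lemma A_f_x_Suc_le_model:
  "A (Suc k) * f (x (Suc k)) \<le> A (Suc k) * f (y k) - (a (Suc k))\<^sup>2 * (norm (grad (y k)))\<^sup>2 / (2 * tau (Suc k))
     + tau k * \<mu> * a (Suc k) * (norm (v k - y k))\<^sup>2 / (2 * tau (Suc k))"
proof -
  have "0 < tau (Suc k)" "0 < A (Suc k)"
    using tau_ge_1[of "Suc k"] A_Suc_pos[of k] by simp_all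
  have "0 \<le> tau k * \<mu> * a (Suc k) * (norm (v k - y k))\<^sup>2 / (2 * tau (Suc k))"
    using mu_pos tau_ge_1[of k] a_Suc_pos[of k] \<open>0 < tau (Suc k)\<close> by simp
  show ?thesis
    using options
  proof
    assume "\<forall>k. agmsdr_step_a grad L \<mu> x y a A tau k"
    hence "(a (Suc k))\<^sup>2 / (tau (Suc k) * A (Suc k)) = 1 / L"
      unfolding agmsdr_step_a_def tau_Suc A_Suc by blast
    hence "(a (Suc k))\<^sup>2 / tau (Suc k) = A (Suc k) / L"
      using \<open>0 < A (Suc k)\<close> \<open>0 < tau (Suc k)\<close> L_pos by (simp add: field_simps)
    hence "(a (Suc k))\<^sup>2 * (norm (grad (y k)))\<^sup>2 / (2 * tau (Suc k))
        = A (Suc k) * ((norm (grad (y k)))\<^sup>2 / (2 * L))"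
      by (metis (no_types, lifting) times_divide_eq_left times_divide_eq_right mult.commute divide_divide_eq_left)
    thus ?thesis
      using f_x_Suc_sufficient_decrease[of k] \<open>0 < A (Suc k)\<close> \<open>0 \<le> tau k * \<mu> * a (Suc k) * _ / _\<close>
        mult_left_mono[OF f_x_Suc_sufficient_decrease[of k], of "A (Suc k)"]
      by (simp add: right_diff_distrib)
  next
    assume "\<forall>k. agmsdr_step_b f grad \<mu> x v y h a A tau k"
    hence "A (Suc k) * f (x (Suc k)) = A (Suc k) * (f (y k)
        - (a (Suc k))\<^sup>2 * (norm (grad (y k)))\<^sup>2 / (2 * tau (Suc k) * A (Suc k))
        + \<mu> * tau k * a (Suc k) * (norm (v k - y k))\<^sup>2 / (2 * tau (Suc k) * A (Suc k)))"
      using step_b_equation by simp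
    thus ?thesis
      using \<open>0 < A (Suc k)\<close> by (simp add: distrib_left right_diff_distrib mult.commute mult.left_commute)
  qed
qed

lemma psi_quadratic: "psi k z = psi k (v k) + tau k / 2 * (norm (z - v k))\<^sup>2"
proof (induction k arbitrary: z)
  case 0
  show ?case by (simp add: psi_0 v_0 tau_0)
next
  case (Suc k)
  define t where "t = tau k + a (Suc k) * \<mu>"
  define p where "p = (1 / t) *\<^sub>R (tau k *\<^sub>R v k + (a (Suc k) * \<mu>) *\<^sub>R y k - a (Suc k) *\<^sub>R grad (y k))"
  have "t = tau (Suc k)" unfolding t_def tau_Suc by simp
  hence "0 < t" using tau_ge_1[of "Suc k"] by simp
  define K where "K = tau k / 2 * (v k \<bullet> v k) - a (Suc k) * (grad (y k) \<bullet> y k)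
    + a (Suc k) * \<mu> / 2 * (y k \<bullet> y k) - t / 2 * (p \<bullet> p)"
  have "psi (Suc k) z = (psi k (v k) + a (Suc k) * f (y k) + K) + t / 2 * (norm (z - p))\<^sup>2" for z
  proof -
    have "psi (Suc k) z = psi k (v k) + a (Suc k) * f (y k) + (tau k / 2 * (norm (z - v k))\<^sup>2
        + a (Suc k) * (grad (y k) \<bullet> (z - y k)) + a (Suc k) * \<mu> / 2 * (norm (z - y k))\<^sup>2)"
      unfolding psi_Suc Suc[of z] by (simp add: algebra_simps)
    also have "tau k / 2 * (norm (z - v k))\<^sup>2 + a (Suc k) * (grad (y k) \<bullet> (z - y k))
        + a (Suc k) * \<mu> / 2 * (norm (z - y k))\<^sup>2 = t / 2 * (norm (z - p))\<^sup>2 + K"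
      unfolding K_def by (rule quadratic_model_canonical_form[OF t_def _ p_def]) (use \<open>0 < t\<close> in simp)
    finally show ?thesis by simp
  qed
  from quadratic_minimizer_form[of "psi (Suc k)", OF this \<open>0 < t\<close> v_Suc_min, of z]
  show ?case unfolding \<open>t = tau (Suc k)\<close> .
qed

lemma psi_le: "psi k z \<le> A k * f z + 1 / 2 * (norm (z - x 0))\<^sup>2"
proof (induction k)
  case 0
  show ?case by (simp add: psi_0 A_0)
next
  case (Suc k)
  have "f (y k) + grad (y k) \<bullet> (z - y k) + \<mu> / 2 * (norm (z - y k))\<^sup>2 \<le> f z"
    using sconv unfolding strongly_convex_def by blast
  hence "a (Suc k) * (f (y k) + grad (y k) \<bullet> (z - y k) + \<mu> / 2 * (norm (z - y k))\<^sup>2) \<le> a (Suc k) * f z"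
    using a_Suc_pos[of k] by (intro mult_left_mono) simp_all
  thus ?case unfolding psi_Suc A_Suc using Suc by (simp add: algebra_simps)
qed

lemma A_f_x_le_psi: "A k * f (x k) \<le> psi k (v k)"
proof (induction k)
  case 0
  show ?case by (simp add: A_0 psi_0 v_0)
next
  case (Suc k)
  let ?w = "v (Suc k)" and ?g = "grad (y k)" and ?a = "a (Suc k)"
  have "psi (Suc k) ?w = psi k (v k) + ?a * f (y k) + (tau k / 2 * (norm (?w - v k))\<^sup>2
      + ?a * (?g \<bullet> (?w - y k)) + ?a * \<mu> / 2 * (norm (?w - y k))\<^sup>2)"
    unfolding psi_Suc psi_quadratic[of k ?w] by (simp add: algebra_simps)
  moreover have "- ?a\<^sup>2 * (norm ?g)\<^sup>2 / (2 * tau (Suc k)) + tau k * \<mu> * ?a * (norm (v k - y k))\<^sup>2 / (2 * tau (Suc k))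
      \<le> tau k / 2 * (norm (?w - v k))\<^sup>2 + ?a * (?g \<bullet> (?w - y k)) + ?a * \<mu> / 2 * (norm (?w - y k))\<^sup>2"
    using quadratic_model_lower_bound[of "tau k" ?a \<mu> ?g "v k" "y k" ?w]
      tau_ge_1[of k] a_Suc_pos[of k] mu_pos gradient_nonneg_towards_v[of k]
    unfolding tau_Suc by simp
  moreover have "A k * f (y k) \<le> A k * f (x k)"
    using f_y_le_f_x[of k] A_nonneg[of k] by (intro mult_left_mono)
  ultimately show ?case
    using Suc A_f_x_Suc_le_model[of k] unfolding A_Suc by (simp add: algebra_simps)
qed

lemma A_pos: "1 \<le> k \<Longrightarrow> 0 < A k"
  using A_Suc_pos by (cases k) auto

lemma gap_le_inverse_A: "1 \<le> k \<Longrightarrow> f (x k) - f xs \<le> (norm (x 0 - xs))\<^sup>2 / (2 * A k)"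
proof -
  assume "1 \<le> k"
  hence "0 < A k" by (rule A_pos)
  have "psi k (v k) \<le> psi k xs"
    using psi_quadratic[of k xs] tau_ge_1[of k] by simp
  hence "A k * f (x k) \<le> A k * f xs + 1 / 2 * (norm (xs - x 0))\<^sup>2"
    using A_f_x_le_psi[of k] psi_le[of k xs] by linarith
  hence "A k * f (x k) \<le> A k * f xs + 1 / 2 * (norm (x 0 - xs))\<^sup>2"
    by (simp only: norm_minus_commute)
  hence "(f (x k) - f xs) * (2 * A k) \<le> (norm (x 0 - xs))\<^sup>2"
    by (simp add: algebra_simps)
  thus ?thesis using \<open>0 < A k\<close> by (simp add: pos_le_divide_eq)
qed

lemma sqrt_A_lower_bound: "real k \<le> 2 * sqrt L * sqrt (A k)"
proof (induction k)
  case 0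
  show ?case using L_pos A_nonneg[of 0] by simp
next
  case (Suc k)
  have "A (Suc k) \<le> tau (Suc k) * A (Suc k)"
    using tau_ge_1[of "Suc k"] A_Suc_pos[of k] by simp
  hence "A k + a (Suc k) \<le> L * (a (Suc k))\<^sup>2"
    using A_growth[of k] unfolding A_Suc by simp
  from sqrt_increment_lower_bound[OF A_nonneg a_Suc_pos L_pos this]
  show ?case using Suc unfolding A_Suc by (simp add: algebra_simps)
qed

lemma A_geometric_lower_bound: "1 \<le> L * A (Suc j) * (1 - sqrt (\<mu> / L)) ^ j"
proof (induction j)
  case 0
  have "A 1 = a 1" using A_Suc[of 0] A_0 by simp
  hence "tau 1 * A 1 \<le> L * A 1 * A 1"
    using A_growth[of 0] by (simp add: power2_eq_square mult.assoc)
  hence "tau 1 \<le> L * A 1"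
    using A_Suc_pos[of 0] by simp
  thus ?case using tau_ge_1[of 1] by simp
next
  case (Suc j)
  let ?q = "sqrt (\<mu> / L)" and ?A = "A (Suc (Suc j))"
  have "\<mu> * ?A * ?A \<le> tau (Suc (Suc j)) * ?A"
    using A_nonneg[of "Suc (Suc j)"] unfolding tau_eq by (intro mult_right_mono) simp_all
  hence "\<mu> * (A (Suc j) + a (Suc (Suc j)))\<^sup>2 \<le> L * (a (Suc (Suc j)))\<^sup>2"
    using A_growth[of "Suc j"] unfolding A_Suc[of "Suc j"] by (simp add: power2_eq_square)
  hence "A (Suc j) \<le> (1 - ?q) * ?A"
    using linear_increment_lower_bound[OF A_nonneg less_imp_le[OF a_Suc_pos] L_pos less_imp_le[OF mu_pos]]
    unfolding A_Suc[of "Suc j"] by blast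
  moreover have "0 \<le> L * (1 - ?q) ^ j"
    using L_pos mu_L by simp
  ultimately have "L * (1 - ?q) ^ j * A (Suc j) \<le> L * (1 - ?q) ^ j * ((1 - ?q) * ?A)"
    by (rule mult_left_mono)
  thus ?case using Suc by (simp add: algebra_simps)
qed

lemma sublinear_rate: "1 \<le> k \<Longrightarrow> f (x k) - f xs \<le> 2 * L * (norm (x 0 - xs))\<^sup>2 / (real k)\<^sup>2"
proof -
  assume "1 \<le> k"
  have "(real k)\<^sup>2 \<le> (2 * sqrt L * sqrt (A k))\<^sup>2"
    using sqrt_A_lower_bound[of k] by (intro power_mono) simp_all
  also have "\<dots> = 4 * L * A k"
    using L_pos A_nonneg[of k] by (simp add: power_mult_distrib)
  finally have "(norm (x 0 - xs))\<^sup>2 * (real k)\<^sup>2 \<le> (norm (x 0 - xs))\<^sup>2 * (4 * L * A k)"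
    by (intro mult_left_mono) simp_all
  hence "(norm (x 0 - xs))\<^sup>2 / (2 * A k) \<le> 2 * L * (norm (x 0 - xs))\<^sup>2 / (real k)\<^sup>2"
    using A_pos[OF \<open>1 \<le> k\<close>] \<open>1 \<le> k\<close> by (simp add: field_simps)
  thus ?thesis using gap_le_inverse_A[OF \<open>1 \<le> k\<close>] by linarith
qed

lemma linear_rate:
  "1 \<le> k \<Longrightarrow> f (x k) - f xs \<le> (1 - sqrt (\<mu> / L)) ^ (k - 1) * L * (norm (x 0 - xs))\<^sup>2"
proof -
  assume "1 \<le> k"
  then obtain j where "k = Suc j" by (cases k) auto
  have "(norm (x 0 - xs))\<^sup>2 * 1
      \<le> (norm (x 0 - xs))\<^sup>2 * (2 * (L * A k * (1 - sqrt (\<mu> / L)) ^ (k - 1)))"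
    using A_geometric_lower_bound[of j] \<open>k = Suc j\<close> by (intro mult_left_mono) simp_all
  hence "(norm (x 0 - xs))\<^sup>2 / (2 * A k) \<le> (1 - sqrt (\<mu> / L)) ^ (k - 1) * L * (norm (x 0 - xs))\<^sup>2"
    using A_pos[OF \<open>1 \<le> k\<close>] by (simp add: field_simps)
  thus ?thesis using gap_le_inverse_A[OF \<open>1 \<le> k\<close>] by linarith
qed

end

theorem mainTheorem7:
  fixes f :: "real^'n \<Rightarrow> real" and grad :: "real^'n \<Rightarrow> real^'n"
    and L \<mu> :: real and xs :: "real^'n"
    and x v y :: "nat \<Rightarrow> real^'n" and beta h a A tau :: "nat \<Rightarrow> real"
    and psi :: "nat \<Rightarrow> real^'n \<Rightarrow> real"
  assumes smooth: "L_smooth f grad L"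
    and sconv: "strongly_convex f grad \<mu>"
    and mu_pos: "0 < \<mu>" and mu_L: "\<mu> < L"
    and minimizer: "\<forall>z. f xs \<le> f z"
    and common: "agmsdr_common f grad \<mu> x v y beta a A tau psi"
    and options: "(\<forall>k. agmsdr_step_a grad L \<mu> x y a A tau k) \<or>
                  (\<forall>k. agmsdr_step_b f grad \<mu> x v y h a A tau k)"
    and grad_nz: "\<forall>k. grad (y k) \<noteq> 0"
  shows "\<forall>k\<ge>1. f (x k) - f xs \<le>
           min (2 * L * (norm (x 0 - xs))\<^sup>2 / (real k)\<^sup>2)
               ((1 - sqrt (\<mu> / L)) ^ (k - 1) * L * (norm (x 0 - xs))\<^sup>2)"
proof -
  interpret agmsdr_sc_run f grad L \<mu> xs x v y beta h a A tau psi
    using assms by unfold_locales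
  show ?thesis using sublinear_rate linear_rate by simp
qed

end
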